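(* Let $2\le j<k$ be integers and $g_k(x,y)=(1+x+y)^k-ky-\bigl((1+x)^k-1\bigr)$. For $n$ a multiple of $k$ and integers $a,b\ge 0$ with $a+b\le n$, define $$E_{n,j,k}\!\left(\tfrac an,\tfrac bn\right)=\frac{\binom{n}{a,\,b,\,n-a-b}\,S_{n,j,k}(a,b)}{\binom{nj}{ja,\,jb,\,j(n-a-b)}},\qquad S_{n,j,k}(a,b)=\operatorname{coeff}\!\left(g_k(x,y)^{nj/k},\,x^{ja}y^{jb}\right).$$ Let $\alpha,\beta>0$ with $\alpha+\beta<1$, and let $(n,a_n,b_n)$ range over sequences with $n\to\infty$ through multiples of $k$ and $a_n/n\to\alpha$, $b_n/n\to\beta$. Then for all $x,y>0$, $$\limsup_{n\to\infty}\frac1n\ln E_{n,j,k}\!\left(\tfrac{a_n}{n},\tfrac{b_n}{n}\right)\le \frac{j}{k}\ln\frac{1+(1+x+y)^k-ky-(1+x)^k}{x^{k\alpha}y^{k\beta}}+(1-j)\,h(\alpha,\beta,1-\alpha-\beta),$$ where $h(p,q,r)=-p\ln p-q\ln q-r\ln r$.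
   Context: $E_{n,j,k}(a/n,b/n)$ is the average number of LM1 stopping sets in a random $(j,k)$-regular LDPC code of length $n$ with $a$ correct (unverified, correctly received) and $b$ incorrect variable nodes, the rest being verified; $g_k(x,y)$ enumerates the edge patterns at a single degree-$k$ check node that prevent LM1 decoding progress ($1$ marks a verified edge, $x$ a correct edge, $y$ an incorrect edge). $\operatorname{coeff}(f,x^py^q)$ denotes the coefficient of $x^py^q$ in the polynomial $f$. *)

theory Defs
  imports "HOL-Analysis.Analysis" "HOL-Computational_Algebra.Polynomial" "HOL-Library.Liminf_Limsup"
begin

text \<open>Bivariate integer polynomials are represented as int poly poly:
  the outer variable is y, the inner variable (coefficients) is x.
  The coefficient of x^p y^q in P is coeff (coeff P q) p.\<close>

definition varX :: "int poly poly" where "varX = [: [:0, 1:] :]"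
definition varY :: "int poly poly" where "varY = [: 0, 1 :]"

definition bicoeff :: "int poly poly \<Rightarrow> nat \<Rightarrow> nat \<Rightarrow> int" where
  "bicoeff P p q = coeff (coeff P q) p"

definition g_poly :: "nat \<Rightarrow> int poly poly" where
  "g_poly k = (1 + varX + varY) ^ k - of_nat k * varY - ((1 + varX) ^ k - 1)"

definition S_njk :: "nat \<Rightarrow> nat \<Rightarrow> nat \<Rightarrow> nat \<Rightarrow> nat \<Rightarrow> int" where
  "S_njk n j k a b = bicoeff (g_poly k ^ (n * j div k)) (j * a) (j * b)"

definition multinom3 :: "nat \<Rightarrow> nat \<Rightarrow> nat \<Rightarrow> real" where
  "multinom3 n a b = fact n / (fact a * fact b * fact (n - a - b))"

definition E_njk :: "nat \<Rightarrow> nat \<Rightarrow> nat \<Rightarrow> nat \<Rightarrow> nat \<Rightarrow> real" where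
  "E_njk n j k a b = multinom3 n a b * real_of_int (S_njk n j k a b)
       / multinom3 (n * j) (j * a) (j * b)"

definition log_rate :: "nat \<Rightarrow> real \<Rightarrow> ereal" where
  "log_rate n e = (if e = 0 then -\<infinity> else ereal (ln e / real n))"

definition entropy3 :: "real \<Rightarrow> real \<Rightarrow> real \<Rightarrow> real" where
  "entropy3 p q r = - p * ln p - q * ln q - r * ln r"

end

theory Submission imports Defs "HOL-Real_Asymp.Real_Asymp" begin

(* Proof idea (first-moment / saddle-point bound).
   1. Evaluation of a bivariate integer polynomial at a point (x,y) of the positive quadrant
      is a ring homomorphism ev x y.  If all coefficients of P are nonnegative, each single
      monomial is dominated by the whole sum: coeff(P, x^p y^q) x^p y^q <= ev x y P.
   2. g_k - 1 has nonnegative coefficients, because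
        (1+x+y)^k - (1+x)^k - k y = y * sum_{i<k} ((1+x)^(k-1-i) (1+x+y)^i - 1).
      Hence g_k^N has nonnegative coefficients, g_k(x,y) >= 1, and
        ln S_{n,j,k}(a,b) <= (nj/k) ln g_k(x,y) - ja ln x - jb ln y.
   3. Elementary Stirling bounds  m ln m - m <= ln m! <= m ln m - m + 1 + ln(m+1)  give
      ln multinom(N;A,B,C) = N h(A/N,B/N,C/N) + O(ln N); scaling all counts by j yields
      ln multinom(n;a,b,c) - ln multinom(nj;ja,jb,jc) <= (1-j) n h + O(ln n).
   4. Together, (1/n) ln E is bounded by an explicit expression in a/n, b/n and n which
      converges to the claimed bound; monotonicity of limsup finishes the proof. *)

section \<open>Evaluating bivariate integer polynomials at real points\<close>

lemma map_poly_add_hom: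
  fixes f :: "'a::comm_semiring_1 \<Rightarrow> 'b::comm_semiring_1"
  assumes "f 0 = 0" "\<And>a b. f (a + b) = f a + f b"
  shows "map_poly f (p + q) = map_poly f p + map_poly f q"
  by (rule poly_eqI) (simp add: coeff_map_poly assms)

lemma map_poly_mult_hom:
  fixes f :: "'a::comm_semiring_1 \<Rightarrow> 'b::comm_semiring_1"
  assumes "f 0 = 0" "\<And>a b. f (a + b) = f a + f b" "\<And>a b. f (a * b) = f a * f b"
  shows "map_poly f (p * q) = map_poly f p * map_poly f q"
proof (rule poly_eqI)
  fix n
  have "f (\<Sum>i\<le>n. coeff p i * coeff q (n - i)) = (\<Sum>i\<le>n. f (coeff p i * coeff q (n - i)))"
    using sum_comp_morphism[of f "\<lambda>i. coeff p i * coeff q (n - i)" "{..n}", OF assms(1,2)]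
    by (simp add: comp_def)
  then show "coeff (map_poly f (p * q)) n = coeff (map_poly f p * map_poly f q) n"
    by (simp add: coeff_map_poly coeff_mult assms(1,3))
qed

lemma map_poly_power_hom:
  fixes f :: "'a::comm_semiring_1 \<Rightarrow> 'b::comm_semiring_1"
  assumes "f 0 = 0" "\<And>a b. f (a + b) = f a + f b" "\<And>a b. f (a * b) = f a * f b" "f 1 = 1"
  shows "map_poly f (p ^ n) = map_poly f p ^ n"
  by (induct n) (simp_all add: map_poly_mult_hom[OF assms(1-3)] assms(4))

definition eval_x :: "real \<Rightarrow> int poly \<Rightarrow> real" where
  "eval_x x c = poly (map_poly real_of_int c) x"

definition ev :: "real \<Rightarrow> real \<Rightarrow> int poly poly \<Rightarrow> real" where
  "ev x y P = poly (map_poly (eval_x x) P) y"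

lemma eval_x_0 [simp]: "eval_x x 0 = 0"
  and eval_x_1 [simp]: "eval_x x 1 = 1"
  and eval_x_add [simp]: "eval_x x (c + d) = eval_x x c + eval_x x d"
  and eval_x_mult [simp]: "eval_x x (c * d) = eval_x x c * eval_x x d"
  by (simp_all add: eval_x_def map_poly_add_hom map_poly_mult_hom)

lemma ev_0 [simp]: "ev x y 0 = 0"
  and ev_1 [simp]: "ev x y 1 = 1"
  and ev_add [simp]: "ev x y (P + Q) = ev x y P + ev x y Q"
  and ev_mult [simp]: "ev x y (P * Q) = ev x y P * ev x y Q"
  and ev_power [simp]: "ev x y (P ^ n) = ev x y P ^ n"
  by (simp_all add: ev_def map_poly_add_hom map_poly_mult_hom map_poly_power_hom)

lemma ev_diff [simp]: "ev x y (P - Q) = ev x y P - ev x y Q"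
  using ev_add[of x y "P - Q" Q] by simp

lemma ev_of_nat [simp]: "ev x y (of_nat n) = real n"
  by (induct n) simp_all

lemma ev_varX [simp]: "ev x y varX = x"
  and ev_varY [simp]: "ev x y varY = y"
  by (simp_all add: ev_def varX_def varY_def eval_x_def map_poly_pCons)

lemma ev_g_poly: "ev x y (g_poly k) = 1 + (1 + x + y) ^ k - real k * y - (1 + x) ^ k"
  by (simp add: g_poly_def)

section \<open>Polynomials with nonnegative coefficients\<close>

definition nonneg_coeffs :: "'a::linordered_semidom poly \<Rightarrow> bool" where
  "nonneg_coeffs c \<longleftrightarrow> (\<forall>i. 0 \<le> coeff c i)"

definition nonneg_bicoeffs :: "'a::linordered_semidom poly poly \<Rightarrow> bool" where
  "nonneg_bicoeffs P \<longleftrightarrow> (\<forall>q. nonneg_coeffs (coeff P q))"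

lemma nonneg_coeffs_add: "nonneg_coeffs c \<Longrightarrow> nonneg_coeffs d \<Longrightarrow> nonneg_coeffs (c + d)"
  and nonneg_coeffs_mult: "nonneg_coeffs c \<Longrightarrow> nonneg_coeffs d \<Longrightarrow> nonneg_coeffs (c * d)"
  and nonneg_coeffs_sum: "(\<And>i. i \<in> A \<Longrightarrow> nonneg_coeffs (f i)) \<Longrightarrow> nonneg_coeffs (sum f A)"
  by (simp_all add: nonneg_coeffs_def coeff_mult coeff_sum sum_nonneg)

lemma nonneg_bicoeffs_add: "nonneg_bicoeffs P \<Longrightarrow> nonneg_bicoeffs Q \<Longrightarrow> nonneg_bicoeffs (P + Q)"
  by (simp add: nonneg_bicoeffs_def nonneg_coeffs_add)

lemma nonneg_bicoeffs_mult: "nonneg_bicoeffs P \<Longrightarrow> nonneg_bicoeffs Q \<Longrightarrow> nonneg_bicoeffs (P * Q)"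
  unfolding nonneg_bicoeffs_def coeff_mult
  by (intro allI nonneg_coeffs_sum nonneg_coeffs_mult) auto

lemma nonneg_bicoeffs_sum:
  "(\<And>i. i \<in> A \<Longrightarrow> nonneg_bicoeffs (f i)) \<Longrightarrow> nonneg_bicoeffs (sum f A)"
  unfolding nonneg_bicoeffs_def coeff_sum by (intro allI nonneg_coeffs_sum) auto

lemma nonneg_bicoeffs_1: "nonneg_bicoeffs 1"
  by (simp add: nonneg_bicoeffs_def nonneg_coeffs_def coeff_1)

lemma nonneg_bicoeffs_varX: "nonneg_bicoeffs varX"
  and nonneg_bicoeffs_varY: "nonneg_bicoeffs varY"
  by (auto simp: nonneg_bicoeffs_def nonneg_coeffs_def varX_def varY_def coeff_pCons
      split: nat.splits)

text \<open>Polynomials of the form 1 + (nonnegative) are closed under products and powers;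
  this is how the nonnegativity of g_k - 1 is established.\<close>

lemma nonneg_bicoeffs_mult_minus_one:
  fixes P Q :: "'a::linordered_idom poly poly"
  assumes "nonneg_bicoeffs (P - 1)" "nonneg_bicoeffs (Q - 1)"
  shows "nonneg_bicoeffs (P * Q - 1)"
proof -
  have "P * Q - 1 = (P - 1) * (Q - 1) + (P - 1) + (Q - 1)"
    by (simp add: algebra_simps)
  then show ?thesis
    by (metis assms nonneg_bicoeffs_add nonneg_bicoeffs_mult)
qed

lemma nonneg_bicoeffs_power_minus_one:
  fixes P :: "'a::linordered_idom poly poly"
  assumes "nonneg_bicoeffs (P - 1)"
  shows "nonneg_bicoeffs (P ^ n - 1)"
proof (induct n)
  case 0
  show ?case by (simp add: nonneg_bicoeffs_def nonneg_coeffs_def)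
next
  case (Suc n)
  then show ?case using nonneg_bicoeffs_mult_minus_one[OF assms] by simp
qed

lemma poly_nonneg_coeffs_bounds:
  fixes r :: "real poly"
  assumes "\<And>i. 0 \<le> coeff r i" "0 \<le> y"
  shows "coeff r q * y ^ q \<le> poly r y" "0 \<le> poly r y"
proof -
  show nonneg: "0 \<le> poly r y"
    unfolding poly_altdef by (intro sum_nonneg) (simp add: assms)
  show "coeff r q * y ^ q \<le> poly r y"
  proof (cases "q \<le> degree r")
    case True
    then show ?thesis unfolding poly_altdef
      by (intro member_le_sum[where f="\<lambda>i. coeff r i * y ^ i"]) (auto simp: assms)
  qed (use nonneg in \<open>simp add: coeff_eq_0\<close>)
qed

lemma eval_x_bounds:
  assumes "nonneg_coeffs c" "0 \<le> x"
  shows "real_of_int (coeff c p) * x ^ p \<le> eval_x x c" "0 \<le> eval_x x c"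
  using poly_nonneg_coeffs_bounds[where r="map_poly real_of_int c" and y=x] assms
  by (auto simp: eval_x_def nonneg_coeffs_def coeff_map_poly)

lemma ev_bicoeff_bounds:
  assumes "nonneg_bicoeffs P" "0 \<le> x" "0 \<le> y"
  shows "real_of_int (bicoeff P p q) * x ^ p * y ^ q \<le> ev x y P" "0 \<le> ev x y P"
proof -
  have coeffs_nonneg: "\<And>i. 0 \<le> coeff (map_poly (eval_x x) P) i"
    using eval_x_bounds(2) assms by (simp add: coeff_map_poly nonneg_bicoeffs_def)
  have "real_of_int (bicoeff P p q) * x ^ p * y ^ q \<le> eval_x x (coeff P q) * y ^ q"
    using eval_x_bounds(1)[of "coeff P q" x p] assms
    by (intro mult_right_mono) (auto simp: bicoeff_def nonneg_bicoeffs_def)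
  also have "\<dots> \<le> ev x y P"
    using poly_nonneg_coeffs_bounds(1)[OF coeffs_nonneg assms(3), of q]
    by (simp add: ev_def coeff_map_poly)
  finally show "real_of_int (bicoeff P p q) * x ^ p * y ^ q \<le> ev x y P" .
  show "0 \<le> ev x y P"
    using poly_nonneg_coeffs_bounds(2)[OF coeffs_nonneg assms(3)] by (simp add: ev_def)
qed

section \<open>The check-node polynomial g_k\<close>

lemma g_poly_minus_one:
  "g_poly k - 1 = varY * (\<Sum>i<k. (1 + varX) ^ (k - Suc i) * (1 + varX + varY) ^ i - 1)"
proof -
  have "(1 + varX + varY) ^ k - (1 + varX) ^ k
      = varY * (\<Sum>i<k. (1 + varX) ^ (k - Suc i) * (1 + varX + varY) ^ i)"
    using power_diff_sumr2[of "1 + varX + varY" k "1 + varX"] by simp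
  then show ?thesis
    by (simp add: g_poly_def sum_subtractf algebra_simps)
qed

lemma nonneg_bicoeffs_g_minus_one: "nonneg_bicoeffs (g_poly k - 1)"
proof -
  have base: "nonneg_bicoeffs ((1 + varX) - 1)" "nonneg_bicoeffs ((1 + varX + varY) - 1)"
    by (simp_all add: nonneg_bicoeffs_varX nonneg_bicoeffs_varY nonneg_bicoeffs_add)
  have "nonneg_bicoeffs ((1 + varX) ^ (k - Suc i) * (1 + varX + varY) ^ i - 1)" for i
    by (intro nonneg_bicoeffs_mult_minus_one nonneg_bicoeffs_power_minus_one base)
  then show ?thesis
    unfolding g_poly_minus_one
    by (intro nonneg_bicoeffs_mult nonneg_bicoeffs_varY nonneg_bicoeffs_sum)
qed

lemma nonneg_bicoeffs_g: "nonneg_bicoeffs (g_poly k)"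
  using nonneg_bicoeffs_add[OF nonneg_bicoeffs_1 nonneg_bicoeffs_g_minus_one] by simp

lemma ev_g_poly_ge_1:
  assumes "0 \<le> x" "0 \<le> y"
  shows "1 \<le> ev x y (g_poly k)"
  using ev_bicoeff_bounds(2)[OF nonneg_bicoeffs_g_minus_one assms] by simp

lemma S_njk_bounds:
  assumes "0 < k" "k dvd n" "S_njk n j k a b \<noteq> 0" "0 < x" "0 < y"
  shows "1 \<le> real_of_int (S_njk n j k a b)"
    "ln (real_of_int (S_njk n j k a b))
       \<le> real n * real j / real k * ln (ev x y (g_poly k))
          - real (j * a) * ln x - real (j * b) * ln y"
proof -
  define N where "N = n * j div k"
  have N: "real N = real n * real j / real k"
    using assms(1,2) by (auto simp: N_def)
  have nonneg: "nonneg_bicoeffs (g_poly k ^ N)"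
    by (induct N) (simp_all add: nonneg_bicoeffs_1 nonneg_bicoeffs_mult nonneg_bicoeffs_g)
  have S: "S_njk n j k a b = bicoeff (g_poly k ^ N) (j * a) (j * b)"
    by (simp add: S_njk_def N_def)
  have "0 \<le> S_njk n j k a b"
    using nonneg unfolding S by (simp add: bicoeff_def nonneg_bicoeffs_def nonneg_coeffs_def)
  then show S_ge_1: "1 \<le> real_of_int (S_njk n j k a b)"
    using assms(3) by simp
  have "real_of_int (S_njk n j k a b) * x ^ (j * a) * y ^ (j * b) \<le> ev x y (g_poly k) ^ N"
    using ev_bicoeff_bounds(1)[OF nonneg, of x y] assms(4,5) unfolding S by simp
  then have "ln (real_of_int (S_njk n j k a b) * x ^ (j * a) * y ^ (j * b))
      \<le> ln (ev x y (g_poly k) ^ N)"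
    using S_ge_1 assms(4,5) by (intro ln_mono) auto
  then show "ln (real_of_int (S_njk n j k a b))
       \<le> real n * real j / real k * ln (ev x y (g_poly k))
          - real (j * a) * ln x - real (j * b) * ln y"
    using S_ge_1 assms(4,5) ev_g_poly_ge_1[of x y k]
    by (simp add: ln_mult ln_realpow N[symmetric])
qed

section \<open>Entropy estimates for multinomial coefficients\<close>

text \<open>Elementary Stirling-type bounds, by induction using ln(1+t) <= t.\<close>

lemma ln_fact_lower: "real m * ln (real m) - real m \<le> ln (fact m)"
proof (induct m)
  case (Suc m)
  have step: "real m * ln (real m + 1) - real m * ln (real m) \<le> 1"
  proof (cases "m = 0")
    case False
    then have m: "real m > 0" by simp
    have "ln ((real m + 1) / real m) \<le> (real m + 1) / real m - 1"
      using m by (intro ln_le_minus_one) simp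
    then have "real m * (ln (real m + 1) - ln (real m)) \<le> real m * (1 / real m)"
      using m by (intro mult_left_mono) (auto simp: ln_div field_simps)
    then show ?thesis using m by (simp add: algebra_simps)
  qed simp
  have "ln (fact (Suc m) :: real) = ln (real m + 1) + ln (fact m)"
    by (simp add: ln_mult add.commute)
  then show ?case using Suc step by (simp add: algebra_simps)
qed simp

lemma ln_fact_upper_aux:
  assumes "1 \<le> m"
  shows "ln (fact m) \<le> (real m + 1) * ln (real m) - real m + 1"
  using assms
proof (induct m rule: dec_induct)
  case (step m)
  then have m: "real m > 0" by simp
  have "ln (real m / (real m + 1)) \<le> real m / (real m + 1) - 1"
    using m by (intro ln_le_minus_one) simp
  then have "(real m + 1) * (ln (real m) - ln (real m + 1)) \<le> (real m + 1) * (- 1 / (real m + 1))"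
    using m by (intro mult_left_mono) (auto simp: ln_div field_simps)
  then have step': "(real m + 1) * ln (real m) + 1 \<le> (real m + 1) * ln (real m + 1)"
    using m by (simp add: algebra_simps)
  have "ln (fact (Suc m) :: real) = ln (real m + 1) + ln (fact m)"
    by (simp add: ln_mult add.commute)
  then show ?case using step step' by (simp add: algebra_simps)
qed simp

lemma ln_fact_upper: "ln (fact m) \<le> real m * ln (real m) - real m + 1 + ln (real m + 1)"
proof (cases "m = 0")
  case False
  then have "ln (real m) \<le> ln (real m + 1)" by simp
  moreover have "(real m + 1) * ln (real m) = real m * ln (real m) + ln (real m)"
    by (simp add: algebra_simps)
  ultimately show ?thesis using ln_fact_upper_aux[of m] False by linarith
qed simp

lemma entropy3_scaled:
  fixes A B C N :: real
  assumes "0 < N" "0 \<le> A" "0 \<le> B" "0 \<le> C" "A + B + C = N"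
  shows "N * entropy3 (A/N) (B/N) (C/N) = N * ln N - A * ln A - B * ln B - C * ln C"
proof -
  have scaled_term: "N * ((t / N) * ln (t / N)) = t * ln t - t * ln N" if "0 \<le> t" for t
    using that assms(1) by (cases "t = 0") (simp_all add: ln_div algebra_simps)
  have "N * entropy3 (A/N) (B/N) (C/N)
      = - (N * ((A / N) * ln (A / N))) - N * ((B / N) * ln (B / N)) - N * ((C / N) * ln (C / N))"
    by (simp add: entropy3_def algebra_simps)
  also have "\<dots> = (A + B + C) * ln N - A * ln A - B * ln B - C * ln C"
    unfolding scaled_term[OF assms(2)] scaled_term[OF assms(3)] scaled_term[OF assms(4)]
    by (simp add: algebra_simps)
  finally show ?thesis using assms(5) by simp
qed

lemma ln_multinom3_bounds:
  assumes "0 < N" "A + B \<le> N"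
  defines "H \<equiv> real N * entropy3 (real A / real N) (real B / real N) (1 - real A / real N - real B / real N)"
  shows "ln (multinom3 N A B) \<le> H + 1 + ln (real N + 1)"
    and "H - 3 - 3 * ln (real N + 1) \<le> ln (multinom3 N A B)"
proof -
  define C where "C = N - A - B"
  have sum: "real A + real B + real C = real N" using assms(2) by (simp add: C_def)
  have "real C = real N - real A - real B" using sum by simp
  then have "1 - real A / real N - real B / real N = real C / real N"
    using assms(1) by (simp add: diff_divide_distrib)
  then have H: "H = real N * ln (real N) - real A * ln (real A) - real B * ln (real B)
      - real C * ln (real C)"
    unfolding H_def using assms(1) sum by (simp add: entropy3_scaled)
  have ln_multinom: "ln (multinom3 N A B) = ln (fact N) - ln (fact A) - ln (fact B) - ln (fact C)"
    by (simp add: multinom3_def C_def ln_div ln_mult)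
  have "ln (real A + 1) \<le> ln (real N + 1)" "ln (real B + 1) \<le> ln (real N + 1)"
    "ln (real C + 1) \<le> ln (real N + 1)" using assms(2) by (auto simp: C_def)
  note fact_bounds = ln_fact_upper[of N] ln_fact_lower[of A] ln_fact_lower[of B]
    ln_fact_lower[of C] ln_fact_lower[of N] ln_fact_upper[of A] ln_fact_upper[of B] ln_fact_upper[of C]
  show "ln (multinom3 N A B) \<le> H + 1 + ln (real N + 1)"
    unfolding H ln_multinom using fact_bounds sum by linarith
  show "H - 3 - 3 * ln (real N + 1) \<le> ln (multinom3 N A B)"
    unfolding H ln_multinom using fact_bounds sum \<open>ln (real A + 1) \<le> ln (real N + 1)\<close>
      \<open>ln (real B + 1) \<le> ln (real N + 1)\<close> \<open>ln (real C + 1) \<le> ln (real N + 1)\<close> by linarith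
qed

text \<open>Scaling all three parts of a multinomial by j multiplies the entropy term by j.\<close>

lemma ln_multinom3_ratio:
  assumes "1 \<le> j" "0 < n" "a + b \<le> n"
  defines "h \<equiv> entropy3 (real a / real n) (real b / real n) (1 - real a / real n - real b / real n)"
  shows "ln (multinom3 n a b) - ln (multinom3 (n * j) (j * a) (j * b))
    \<le> (1 - real j) * real n * h + 4 + 3 * ln (real j) + 4 * ln (real n + 1)"
proof -
  have "j * a + j * b \<le> n * j" using mult_le_mono1[OF assms(3), of j] by (simp add: algebra_simps)
  moreover have "real (j * a) / real (n * j) = real a / real n"
    "real (j * b) / real (n * j) = real b / real n" using assms(1) by simp_all
  ultimately have lower: "real (n * j) * h - 3 - 3 * ln (real (n * j) + 1)
      \<le> ln (multinom3 (n * j) (j * a) (j * b))"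
    using ln_multinom3_bounds(2)[of "n * j" "j * a" "j * b"] assms(1,2) by (simp add: h_def)
  have "ln (real (n * j) + 1) \<le> ln (real j * (real n + 1))"
    using assms(1) by (intro ln_mono) (auto simp: algebra_simps add_pos_nonneg)
  then have "ln (real (n * j) + 1) \<le> ln (real j) + ln (real n + 1)"
    using assms(1) by (simp add: ln_mult)
  then show ?thesis
    using ln_multinom3_bounds(1)[OF assms(2,3)] lower by (simp add: h_def algebra_simps)
qed

text \<open>The explicit upper bound for (1/n) ln E in terms of the fractions p = a/n, q = b/n, the
  length n, and the value G = g_k(x,y) at the chosen point (x,y); it splits into the limit
  expression and an O(ln n / n) error term.\<close>

definition rate_bound :: "nat \<Rightarrow> nat \<Rightarrow> real \<Rightarrow> real \<Rightarrow> real \<Rightarrow> real \<Rightarrow> real \<Rightarrow> nat \<Rightarrow> real" where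
  "rate_bound j k G x y p q n =
     (1 - real j) * entropy3 p q (1 - p - q) + real j / real k * ln G
     - real j * p * ln x - real j * q * ln y
     + (4 + 3 * ln (real j)) * (1 / real n) + 4 * (ln (real n + 1) / real n)"

lemma log_rate_E_bound:
  assumes "1 \<le> j" "0 < k" "k dvd n" "0 < n" "a + b \<le> n" "0 < x" "0 < y"
  shows "log_rate n (E_njk n j k a b)
    \<le> ereal (rate_bound j k (ev x y (g_poly k)) x y (real a / real n) (real b / real n) n)"
    (is "_ \<le> ereal ?R")
proof (cases "S_njk n j k a b = 0")
  case False
  note S = S_njk_bounds[OF assms(2,3) False assms(6,7)]
  have multinom_pos: "0 < multinom3 n a b" "0 < multinom3 (n * j) (j * a) (j * b)"
    by (simp_all add: multinom3_def)
  have "ln (E_njk n j k a b) = ln (real_of_int (S_njk n j k a b))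
      + (ln (multinom3 n a b) - ln (multinom3 (n * j) (j * a) (j * b)))"
    unfolding E_njk_def using multinom_pos S(1) by (simp add: ln_div ln_mult)
  also have "\<dots> \<le> real n * ?R"
  proof -
    have "real n * rate_bound j k G x y (real a / real n) (real b / real n) n
      = (1 - real j) * real n * entropy3 (real a / real n) (real b / real n)
          (1 - real a / real n - real b / real n)
        + real n * real j / real k * ln G - real (j * a) * ln x - real (j * b) * ln y
        + 4 + 3 * ln (real j) + 4 * ln (real n + 1)" for G
      unfolding rate_bound_def
      using assms(4) by (simp add: field_simps del: times_divide_eq_left)
    then show ?thesis using S(2) ln_multinom3_ratio[OF assms(1,4,5)] by simp
  qed
  finally have "ln (E_njk n j k a b) / real n \<le> ?R"
    using assms(4) by (simp add: pos_divide_le_eq mult.commute)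
  moreover have "E_njk n j k a b \<noteq> 0"
    unfolding E_njk_def using multinom_pos S(1) by simp
  ultimately show ?thesis by (simp add: log_rate_def)
qed (simp add: log_rate_def E_njk_def)

text \<open>Along n \<rightarrow> \<infinity> with fractions converging to an interior point of the simplex, the
  error term vanishes and the entropy term converges by continuity of t ln t on (0,1).\<close>

lemma rate_bound_tendsto:
  fixes nn :: "nat \<Rightarrow> nat" and p q :: "nat \<Rightarrow> real"
  assumes "filterlim nn at_top sequentially" "p \<longlonglongrightarrow> \<alpha>" "q \<longlonglongrightarrow> \<beta>"
    and "\<alpha> > 0" "\<beta> > 0" "\<alpha> + \<beta> < 1"
  shows "(\<lambda>m. rate_bound j k G x y (p m) (q m) (nn m)) \<longlonglongrightarrow>
    (1 - real j) * entropy3 \<alpha> \<beta> (1 - \<alpha> - \<beta>) + real j / real k * ln G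
      - real j * \<alpha> * ln x - real j * \<beta> * ln y"
proof -
  have "(\<lambda>m. 1 / real (nn m)) \<longlonglongrightarrow> 0" "(\<lambda>m. ln (real (nn m) + 1) / real (nn m)) \<longlonglongrightarrow> 0"
    by (rule filterlim_compose[OF _ assms(1)], real_asymp)+
  then have "(\<lambda>m. rate_bound j k G x y (p m) (q m) (nn m)) \<longlonglongrightarrow>
    (1 - real j) * entropy3 \<alpha> \<beta> (1 - \<alpha> - \<beta>) + real j / real k * ln G
      - real j * \<alpha> * ln x - real j * \<beta> * ln y + (4 + 3 * ln (real j)) * 0 + 4 * 0"
    unfolding rate_bound_def entropy3_def using assms(2-6)
    by (intro tendsto_intros tendsto_ln) auto
  then show ?thesis by simp
qed

lemma limsup_le_tendsto:
  assumes "\<forall>\<^sub>F m in sequentially. f m \<le> ereal (R m)" "R \<longlonglongrightarrow> L"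
  shows "limsup f \<le> ereal L"
proof -
  have "limsup f \<le> limsup (\<lambda>m. ereal (R m))"
    using assms(1) by (rule Limsup_mono)
  also have "\<dots> = ereal L"
    using assms(2) by (intro lim_imp_Limsup) (auto simp: lim_ereal)
  finally show ?thesis .
qed

theorem theorem6:
  fixes j k :: nat and \<alpha> \<beta> x y :: real
    and nn a b :: "nat \<Rightarrow> nat"
  assumes "2 \<le> j" and "j < k"
    and "\<alpha> > 0" and "\<beta> > 0" and "\<alpha> + \<beta> < 1"
    and "filterlim nn at_top sequentially"
    and "\<And>m. k dvd nn m"
    and "\<And>m. a m + b m \<le> nn m"
    and "(\<lambda>m. real (a m) / real (nn m)) \<longlonglongrightarrow> \<alpha>"
    and "(\<lambda>m. real (b m) / real (nn m)) \<longlonglongrightarrow> \<beta>"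
    and "x > 0" and "y > 0"
  shows "limsup (\<lambda>m. log_rate (nn m) (E_njk (nn m) j k (a m) (b m)))
    \<le> ereal (real j / real k *
          ln ((1 + (1 + x + y) ^ k - real k * y - (1 + x) ^ k)
              / (x powr (real k * \<alpha>) * y powr (real k * \<beta>)))
        + (1 - real j) * entropy3 \<alpha> \<beta> (1 - \<alpha> - \<beta>))"
proof -
  define G where "G = ev x y (g_poly k)"
  define R where "R m = rate_bound j k G x y (real (a m) / real (nn m)) (real (b m) / real (nn m)) (nn m)"
    for m
  have ln_ratio: "ln ((1 + (1 + x + y) ^ k - real k * y - (1 + x) ^ k)
      / (x powr (real k * \<alpha>) * y powr (real k * \<beta>)))
    = ln G - real k * \<alpha> * ln x - real k * \<beta> * ln y"
    using ev_g_poly_ge_1[of x y k] assms(11,12)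
    by (simp add: G_def ev_g_poly ln_div ln_mult ln_powr)
  have "\<forall>\<^sub>F m in sequentially. 1 \<le> nn m"
    using assms(6) unfolding filterlim_at_top by simp
  then have "\<forall>\<^sub>F m in sequentially. log_rate (nn m) (E_njk (nn m) j k (a m) (b m)) \<le> ereal (R m)"
    by eventually_elim (use log_rate_E_bound[of j k] assms in \<open>simp add: R_def G_def\<close>)
  moreover have "R \<longlonglongrightarrow> (1 - real j) * entropy3 \<alpha> \<beta> (1 - \<alpha> - \<beta>) + real j / real k * ln G
      - real j * \<alpha> * ln x - real j * \<beta> * ln y"
    unfolding R_def using assms(3-6,9,10) by (intro rate_bound_tendsto)
  ultimately have "limsup (\<lambda>m. log_rate (nn m) (E_njk (nn m) j k (a m) (b m)))
    \<le> ereal ((1 - real j) * entropy3 \<alpha> \<beta> (1 - \<alpha> - \<beta>) + real j / real k * ln G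
      - real j * \<alpha> * ln x - real j * \<beta> * ln y)"
    by (rule limsup_le_tendsto)
  also have "(1 - real j) * entropy3 \<alpha> \<beta> (1 - \<alpha> - \<beta>) + real j / real k * ln G
      - real j * \<alpha> * ln x - real j * \<beta> * ln y
    = real j / real k * ln ((1 + (1 + x + y) ^ k - real k * y - (1 + x) ^ k)
      / (x powr (real k * \<alpha>) * y powr (real k * \<beta>)))
      + (1 - real j) * entropy3 \<alpha> \<beta> (1 - \<alpha> - \<beta>)"
    unfolding ln_ratio using assms(1,2) by (simp add: field_simps)
  finally show ?thesis .
qed

end
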